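(* Let $(\Omega,\mathcal{F},P)$ be a probability space, $\mathcal{X}$ a measurable space, $X:\Omega\to\mathcal{X}$ measurable, $u:\mathcal{X}\to\mathbb{R}$ measurable with $\mathbb{E}[u(X)]$ finite, and $\beta\ge 0$. Let $\mathbb{E}_\beta[u(X)]$ denote the unique $v\in\mathbb{R}$ with $\mathbb{E}[(u(X)-v)^+]=(1+\beta)\mathbb{E}[(v-u(X))^+]$. Let $$\mathcal{Q}_\beta=\left\{Q:\ Q\ll P,\ \frac{\mathrm{d}Q}{\mathrm{d}P}=\frac{1_{D^c}+(1+\beta)1_D}{1+\beta P(D)}\text{ for some }D\in\mathcal{F}\right\}.$$ Then $$\mathbb{E}_\beta[u(X)]=\min_{Q\in\mathcal{Q}_\beta}\mathbb{E}^Q[u(X)],$$ and the minimum is attained at $Q^*$ with $\dfrac{\mathrm{d}Q^*}{\mathrm{d}P}=\dfrac{1_{D_X^c}+(1+\beta)1_{D_X}}{1+\beta P(D_X)}$, where $D_X=\{\omega: u(X(\omega))<\mathbb{E}_\beta[u(X)]\}$.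
   Context: $s^+=\max\{s,0\}$; $\mathbb{E}^Q$ denotes expectation under $Q$. *)

theory Defs
  imports "HOL-Probability.Probability"
begin

definition expectile_beta :: "'a measure \<Rightarrow> real \<Rightarrow> ('a \<Rightarrow> real) \<Rightarrow> real" where
  "expectile_beta M \<beta> f =
     (THE v. (\<integral>\<omega>. max (f \<omega> - v) 0 \<partial>M) = (1 + \<beta>) * (\<integral>\<omega>. max (v - f \<omega>) 0 \<partial>M))"

definition dens_beta :: "'a measure \<Rightarrow> real \<Rightarrow> 'a set \<Rightarrow> 'a \<Rightarrow> real" where
  "dens_beta M \<beta> D \<omega> =
     (indicator (space M - D) \<omega> + (1 + \<beta>) * indicator D \<omega>) / (1 + \<beta> * measure M D)"

definition Q_of :: "'a measure \<Rightarrow> real \<Rightarrow> 'a set \<Rightarrow> 'a measure" where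
  "Q_of M \<beta> D = density M (\<lambda>\<omega>. ennreal (dens_beta M \<beta> D \<omega>))"

definition Q_beta :: "'a measure \<Rightarrow> real \<Rightarrow> 'a measure set" where
  "Q_beta M \<beta> = {Q_of M \<beta> D | D. D \<in> sets M}"

end

theory Submission imports Defs begin

text \<open>Write \<open>E[(f - v)\<^sup>+] - (1 + \<beta>) E[(v - f)\<^sup>+] = E f - v - \<beta> E[(v - f)\<^sup>+]\<close>: the
  right-hand side is continuous, strictly decreasing in \<open>v\<close> and changes sign, so it has a unique
  zero \<open>e\<close>. Using this root equation, for the measure \<open>Q\<^sub>D\<close> with density \<open>dens_beta M \<beta> D\<close> one
  gets \<open>(1 + \<beta> P(D)) (E\<^sub>Q\<^sub>D f - e) = \<beta> E[(e - f)\<^sup>+ - 1\<^sub>D (e - f)]\<close>, and this integrand is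
  nonnegative for every \<open>D\<close> and vanishes identically for \<open>D = {f < e}\<close>.\<close>

context prob_space
begin

lemma integral_pos_part_eq:
  fixes f :: "'a \<Rightarrow> real"
  assumes f: "integrable M f"
  shows "(\<integral>\<omega>. max (f \<omega> - v) 0 \<partial>M) = expectation f - v + (\<integral>\<omega>. max (v - f \<omega>) 0 \<partial>M)"
proof -
  have "(\<integral>\<omega>. max (f \<omega> - v) 0 \<partial>M) = (\<integral>\<omega>. (f \<omega> - v) + max (v - f \<omega>) 0 \<partial>M)"
    by (rule Bochner_Integration.integral_cong) auto
  also have "\<dots> = (\<integral>\<omega>. f \<omega> - v \<partial>M) + (\<integral>\<omega>. max (v - f \<omega>) 0 \<partial>M)"
    using f by (intro Bochner_Integration.integral_add) auto
  also have "(\<integral>\<omega>. f \<omega> - v \<partial>M) = expectation f - v"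
    using f by (subst Bochner_Integration.integral_diff) (auto simp: prob_space)
  finally show ?thesis .
qed

lemma integral_neg_part_mono:
  fixes f :: "'a \<Rightarrow> real"
  assumes "integrable M f" and "v \<le> w"
  shows "(\<integral>\<omega>. max (v - f \<omega>) 0 \<partial>M) \<le> (\<integral>\<omega>. max (w - f \<omega>) 0 \<partial>M)"
  using assms by (intro integral_mono) auto

lemma lipschitz_integral_neg_part:
  fixes f :: "'a \<Rightarrow> real"
  assumes f: "integrable M f"
  shows "1-lipschitz_on UNIV (\<lambda>v. \<integral>\<omega>. max (v - f \<omega>) 0 \<partial>M)"
proof (rule lipschitz_onI)
  fix v w :: real
  have "\<bar>(\<integral>\<omega>. max (v - f \<omega>) 0 \<partial>M) - (\<integral>\<omega>. max (w - f \<omega>) 0 \<partial>M)\<bar>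
      = \<bar>\<integral>\<omega>. max (v - f \<omega>) 0 - max (w - f \<omega>) 0 \<partial>M\<bar>"
    using f by (subst Bochner_Integration.integral_diff) auto
  also have "\<dots> \<le> (\<integral>\<omega>. \<bar>max (v - f \<omega>) 0 - max (w - f \<omega>) 0\<bar> \<partial>M)"
    by (rule integral_abs_bound)
  also have "\<dots> \<le> (\<integral>\<omega>. \<bar>v - w\<bar> \<partial>M)"
    using f by (intro integral_mono) auto
  also have "\<dots> = \<bar>v - w\<bar>"
    by (simp add: prob_space)
  finally show "dist (\<integral>\<omega>. max (v - f \<omega>) 0 \<partial>M) (\<integral>\<omega>. max (w - f \<omega>) 0 \<partial>M) \<le> 1 * dist v w"
    by (simp add: dist_real_def)
qed simp

lemma expectile_equation_iff:
  fixes f :: "'a \<Rightarrow> real"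
  assumes "integrable M f"
  shows "(\<integral>\<omega>. max (f \<omega> - v) 0 \<partial>M) = (1 + \<beta>) * (\<integral>\<omega>. max (v - f \<omega>) 0 \<partial>M)
    \<longleftrightarrow> expectation f - v = \<beta> * (\<integral>\<omega>. max (v - f \<omega>) 0 \<partial>M)"
  unfolding integral_pos_part_eq[OF assms] by (auto simp: algebra_simps)

lemma expectile_equation_unique:
  fixes f :: "'a \<Rightarrow> real"
  assumes f: "integrable M f" and \<beta>: "\<beta> \<ge> 0"
  shows "\<exists>!v. (\<integral>\<omega>. max (f \<omega> - v) 0 \<partial>M) = (1 + \<beta>) * (\<integral>\<omega>. max (v - f \<omega>) 0 \<partial>M)"
proof -
  define h where "h v = (\<integral>\<omega>. max (v - f \<omega>) 0 \<partial>M)" for v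
  define g where "g v = expectation f - v - \<beta> * h v" for v
  have h_nonneg: "h v \<ge> 0" for v
    unfolding h_def by (rule integral_nonneg_AE) auto
  have g_strict_antimono: "g w < g v" if "v < w" for v w
    using integral_neg_part_mono[OF f, of v w] that \<beta>
    unfolding g_def h_def by (smt (verit) mult_left_mono)
  define v\<^sub>0 where "v\<^sub>0 = expectation f - \<beta> * h (expectation f)"
  have v\<^sub>0_le: "v\<^sub>0 \<le> expectation f"
    unfolding v\<^sub>0_def using h_nonneg \<beta> by simp
  have "h v\<^sub>0 \<le> h (expectation f)"
    unfolding h_def using integral_neg_part_mono[OF f v\<^sub>0_le] .
  then have "g v\<^sub>0 \<ge> 0"
    unfolding g_def v\<^sub>0_def using \<beta> by (simp add: mult_left_mono)
  moreover have "g (expectation f) \<le> 0"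
    unfolding g_def using h_nonneg \<beta> by simp
  moreover have "continuous_on UNIV h"
    unfolding h_def using lipschitz_integral_neg_part[OF f] by (rule lipschitz_on_continuous_on)
  then have "continuous_on {v\<^sub>0..expectation f} g"
    unfolding g_def by (auto intro!: continuous_intros elim: continuous_on_subset)
  ultimately obtain v where "g v = 0"
    using IVT2'[of g "expectation f" 0 v\<^sub>0] v\<^sub>0_le by auto
  moreover have "v = w" if "g v = 0" "g w = 0" for v w
    using that g_strict_antimono[of v w] g_strict_antimono[of w v] by fastforce
  ultimately have "\<exists>!v. g v = 0"
    by blast
  then show ?thesis
    unfolding expectile_equation_iff[OF f] g_def h_def by simp
qed

lemma expectile_beta_root:
  fixes f :: "'a \<Rightarrow> real"
  assumes "integrable M f" and "\<beta> \<ge> 0"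
  shows "expectation f - expectile_beta M \<beta> f
    = \<beta> * (\<integral>\<omega>. max (expectile_beta M \<beta> f - f \<omega>) 0 \<partial>M)"
  using theI'[OF expectile_equation_unique[OF assms]]
  unfolding expectile_beta_def expectile_equation_iff[OF assms(1)] .

lemma Q_of_normalizer_pos:
  assumes "\<beta> \<ge> 0"
  shows "1 + \<beta> * prob D > 0"
  using assms by (smt (verit) measure_nonneg mult_nonneg_nonneg)

lemma
  fixes f :: "'a \<Rightarrow> real"
  assumes f: "integrable M f" and \<beta>: "\<beta> \<ge> 0" and D: "D \<in> sets M"
  shows integrable_Q_of: "integrable (Q_of M \<beta> D) f"
    and integral_Q_of: "(1 + \<beta> * prob D) * (\<integral>\<omega>. f \<omega> \<partial>Q_of M \<beta> D)
      = expectation f + \<beta> * (\<integral>\<omega>. indicator D \<omega> * f \<omega> \<partial>M)"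
proof -
  have f_measurable[measurable]: "f \<in> borel_measurable M"
    using f by auto
  note [measurable] = D
  define c where "c = 1 + \<beta> * prob D"
  have c: "c > 0"
    unfolding c_def using Q_of_normalizer_pos[OF \<beta>] .
  have dens_measurable: "dens_beta M \<beta> D \<in> borel_measurable M"
    unfolding dens_beta_def by measurable
  have dens_nonneg: "AE \<omega> in M. 0 \<le> dens_beta M \<beta> D \<omega>"
    using c \<beta> unfolding dens_beta_def c_def by (auto simp: indicator_def)
  have dens_times_f: "dens_beta M \<beta> D \<omega> * f \<omega> = (f \<omega> + \<beta> * (indicator D \<omega> * f \<omega>)) / c"
    if "\<omega> \<in> space M" for \<omega>
    using that unfolding dens_beta_def c_def by (auto simp: indicator_def field_simps)
  have indicator_f: "integrable M (\<lambda>\<omega>. indicator D \<omega> * f \<omega>)"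
    using integrable_mult_indicator[OF D f] by simp
  have "integrable M (\<lambda>\<omega>. dens_beta M \<beta> D \<omega> * f \<omega>)
      \<longleftrightarrow> integrable M (\<lambda>\<omega>. (f \<omega> + \<beta> * (indicator D \<omega> * f \<omega>)) / c)"
    by (rule Bochner_Integration.integrable_cong) (auto simp: dens_times_f)
  then show "integrable (Q_of M \<beta> D) f"
    unfolding Q_of_def integrable_density[OF f_measurable dens_measurable dens_nonneg, simplified]
    using f indicator_f by auto
  have "(\<integral>\<omega>. f \<omega> \<partial>Q_of M \<beta> D) = (\<integral>\<omega>. (f \<omega> + \<beta> * (indicator D \<omega> * f \<omega>)) / c \<partial>M)"
    unfolding Q_of_def integral_density[OF f_measurable dens_measurable dens_nonneg, simplified]
    by (rule Bochner_Integration.integral_cong) (auto simp: dens_times_f)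
  also have "\<dots> = (expectation f + \<beta> * (\<integral>\<omega>. indicator D \<omega> * f \<omega> \<partial>M)) / c"
    using f indicator_f by simp
  finally show "(1 + \<beta> * prob D) * (\<integral>\<omega>. f \<omega> \<partial>Q_of M \<beta> D)
      = expectation f + \<beta> * (\<integral>\<omega>. indicator D \<omega> * f \<omega> \<partial>M)"
    using c unfolding c_def by simp
qed

lemma integral_Q_of_minus_expectile_beta:
  fixes f :: "'a \<Rightarrow> real"
  assumes f: "integrable M f" and \<beta>: "\<beta> \<ge> 0" and D: "D \<in> sets M"
  defines "e \<equiv> expectile_beta M \<beta> f"
  shows "(1 + \<beta> * prob D) * ((\<integral>\<omega>. f \<omega> \<partial>Q_of M \<beta> D) - e)
    = \<beta> * (\<integral>\<omega>. max (e - f \<omega>) 0 - indicator D \<omega> * (e - f \<omega>) \<partial>M)"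
proof -
  have indicator_f: "integrable M (\<lambda>\<omega>. indicator D \<omega> * f \<omega>)"
    using integrable_mult_indicator[OF D f] by simp
  have indicator_e: "integrable M (\<lambda>\<omega>. e * indicator D \<omega>)"
    using D by (auto simp: emeasure_eq_measure)
  have "(\<integral>\<omega>. indicator D \<omega> * (e - f \<omega>) \<partial>M) = (\<integral>\<omega>. e * indicator D \<omega> - indicator D \<omega> * f \<omega> \<partial>M)"
    by (rule Bochner_Integration.integral_cong) (auto simp: algebra_simps)
  also have "\<dots> = e * prob D - (\<integral>\<omega>. indicator D \<omega> * f \<omega> \<partial>M)"
    using indicator_e indicator_f D by (simp add: Int_absorb2 sets.sets_into_space)
  finally have gap: "(\<integral>\<omega>. max (e - f \<omega>) 0 - indicator D \<omega> * (e - f \<omega>) \<partial>M)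
      = (\<integral>\<omega>. max (e - f \<omega>) 0 \<partial>M) - (e * prob D - (\<integral>\<omega>. indicator D \<omega> * f \<omega> \<partial>M))"
    using f D integrable_mult_indicator[OF D, of "\<lambda>\<omega>. e - f \<omega>"]
    by (subst Bochner_Integration.integral_diff) auto
  show ?thesis
    unfolding gap using integral_Q_of[OF f \<beta> D] expectile_beta_root[OF f \<beta>]
    unfolding e_def by (simp add: algebra_simps)
qed

lemma expectile_beta_le_integral_Q_of:
  fixes f :: "'a \<Rightarrow> real"
  assumes f: "integrable M f" and \<beta>: "\<beta> \<ge> 0" and D: "D \<in> sets M"
  shows "expectile_beta M \<beta> f \<le> (\<integral>\<omega>. f \<omega> \<partial>Q_of M \<beta> D)"
proof -
  let ?e = "expectile_beta M \<beta> f"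
  have "0 \<le> (\<integral>\<omega>. max (?e - f \<omega>) 0 - indicator D \<omega> * (?e - f \<omega>) \<partial>M)"
    by (rule integral_nonneg_AE) (auto simp: indicator_def)
  then have "0 \<le> (1 + \<beta> * prob D) * ((\<integral>\<omega>. f \<omega> \<partial>Q_of M \<beta> D) - ?e)"
    unfolding integral_Q_of_minus_expectile_beta[OF f \<beta> D] using \<beta> by simp
  then show ?thesis
    using Q_of_normalizer_pos[OF \<beta>, of D] by (simp add: zero_le_mult_iff)
qed

lemma expectile_beta_eq_integral_Q_of_sublevel:
  fixes f :: "'a \<Rightarrow> real"
  assumes f: "integrable M f" and \<beta>: "\<beta> \<ge> 0"
  defines "D \<equiv> {\<omega> \<in> space M. f \<omega> < expectile_beta M \<beta> f}"
  shows "expectile_beta M \<beta> f = (\<integral>\<omega>. f \<omega> \<partial>Q_of M \<beta> D)"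
proof -
  let ?e = "expectile_beta M \<beta> f"
  have D_sets: "D \<in> sets M"
    unfolding D_def using borel_measurable_integrable[OF f] by measurable
  have "(\<integral>\<omega>. max (?e - f \<omega>) 0 - indicator D \<omega> * (?e - f \<omega>) \<partial>M) = (\<integral>\<omega>. 0 \<partial>M)"
    by (rule Bochner_Integration.integral_cong) (auto simp: indicator_def D_def)
  then have "(1 + \<beta> * prob D) * ((\<integral>\<omega>. f \<omega> \<partial>Q_of M \<beta> D) - ?e) = 0"
    unfolding integral_Q_of_minus_expectile_beta[OF f \<beta> D_sets] by simp
  then show ?thesis
    using Q_of_normalizer_pos[OF \<beta>, of D] by simp
qed

end

theorem theorem3:
  fixes M :: "'a measure" and N :: "'b measure"
    and X :: "'a \<Rightarrow> 'b" and u :: "'b \<Rightarrow> real" and \<beta> :: real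
  assumes "prob_space M"
    and "X \<in> measurable M N"
    and "u \<in> borel_measurable N"
    and "integrable M (\<lambda>\<omega>. u (X \<omega>))"
    and "\<beta> \<ge> 0"
  shows "(\<exists>!v. (\<integral>\<omega>. max (u (X \<omega>) - v) 0 \<partial>M)
                 = (1 + \<beta>) * (\<integral>\<omega>. max (v - u (X \<omega>)) 0 \<partial>M))
    \<and> (let e = expectile_beta M \<beta> (\<lambda>\<omega>. u (X \<omega>));
           D\<^sub>X = {\<omega> \<in> space M. u (X \<omega>) < e}
       in Q_of M \<beta> D\<^sub>X \<in> Q_beta M \<beta>
          \<and> integrable (Q_of M \<beta> D\<^sub>X) (\<lambda>\<omega>. u (X \<omega>))
          \<and> e = (\<integral>\<omega>. u (X \<omega>) \<partial>(Q_of M \<beta> D\<^sub>X))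
          \<and> (\<forall>Q \<in> Q_beta M \<beta>. integrable Q (\<lambda>\<omega>. u (X \<omega>))
                 \<and> e \<le> (\<integral>\<omega>. u (X \<omega>) \<partial>Q)))"
proof -
  interpret prob_space M by fact
  define f where "f = (\<lambda>\<omega>. u (X \<omega>))"
  have f: "integrable M f" and \<beta>: "\<beta> \<ge> 0"
    unfolding f_def by fact+
  define D\<^sub>X where "D\<^sub>X = {\<omega> \<in> space M. f \<omega> < expectile_beta M \<beta> f}"
  have D\<^sub>X: "D\<^sub>X \<in> sets M"
    unfolding D\<^sub>X_def using borel_measurable_integrable[OF f] by measurable
  have "\<forall>Q \<in> Q_beta M \<beta>. integrable Q f \<and> expectile_beta M \<beta> f \<le> (\<integral>\<omega>. f \<omega> \<partial>Q)"
    unfolding Q_beta_def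
    using integrable_Q_of[OF f \<beta>] expectile_beta_le_integral_Q_of[OF f \<beta>] by blast
  moreover have "Q_of M \<beta> D\<^sub>X \<in> Q_beta M \<beta>"
    unfolding Q_beta_def using D\<^sub>X by blast
  ultimately show ?thesis
    using expectile_equation_unique[OF f \<beta>] integrable_Q_of[OF f \<beta> D\<^sub>X]
      expectile_beta_eq_integral_Q_of_sublevel[OF f \<beta>]
    unfolding Let_def f_def D\<^sub>X_def by simp
qed

end
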